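(* Let $\gamma$ be the probability measure on $\partial^{\mathrm{in}}V_{N,r}$ defined by $\gamma(x):=\mathsf P^x(\tau_{\mathbb{Z}^2\setminus W_N}<\tau^+_{V_{N,r}})/(2\operatorname{Cap}^{W_N}(V_{N,r}))$, let $\overline\phi:=\sum_{x\in\partial^{\mathrm{in}}V_{N,r}}\gamma(x)\phi(x)$, and let $\gamma\Pi$ denote the law of $S_{\tau_{\partial^{\mathrm{in}}V_N}}$ under $\mathsf P^\gamma$. Then $$\operatorname{Var}(\overline\phi)=\frac{\mathsf P^{\gamma\Pi}(\tau_{V_{N,r}}<\tau_{\mathbb{Z}^2\setminus W_N})}{2\operatorname{Cap}^{W_N}(V_{N,r})}.$$
   Context: $V\subset W\subset\mathbb{R}^2$ non-empty bounded simply connected open sets, $V$ compactly contained in $W$; $W_N:=NW\cap\mathbb{Z}^2$, $V_N:=NV\cap\mathbb{Z}^2$; for $r>0$ with $r/N$ small, $V_{N,r}:=NV^{r/N}\cap\mathbb{Z}^2$ where $V^s:=\{x\in V:\operatorname{dist}(x,\partial V)>s\}$. $h$ is the DGFF on $W_N$ with zero boundary condition (covariance the Green function $G_{W_N}$). $\partial^{\mathrm{in}}\Lambda:=\{x\in\Lambda:\exists y\notin\Lambda,|x-y|_1=1\}$, $\Lambda^-:=\Lambda\setminus\partial^{\mathrm{in}}\Lambda$. $\phi$ is the harmonic extension of $h|_{\mathbb{Z}^2\setminus V_N^-}$ to $V_N^-$. $\operatorname{Cap}^{W_N}(A):=\inf\{\frac12\langle f,Lf\rangle:f|_A\equiv1,f|_{\mathbb{Z}^2\setminus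 W_N}\equiv0\}$ with $Lf(x)=\frac14\sum_{y\sim x}(f(x)-f(y))$. $(S_t)$ simple random walk; $\mathsf P^\mu$ its law from initial distribution $\mu$; $\tau_A:=\inf\{t\ge0:S_t\in A\}$, $\tau^+_A:=\inf\{t\ge1:S_t\in A\}$. *)

theory Defs
  imports "HOL-Probability.Probability"
begin

type_synonym pt = "int \<times> int"

definition emb :: "pt \<Rightarrow> real \<times> real" where
  "emb z = (real_of_int (fst z), real_of_int (snd z))"

definition lat :: "nat \<Rightarrow> (real \<times> real) set \<Rightarrow> pt set" where
  "lat N S = {z. emb z \<in> (\<lambda>x. real N *\<^sub>R x) ` S}"

definition inner_part :: "(real \<times> real) set \<Rightarrow> real \<Rightarrow> (real \<times> real) set" where
  "inner_part V s = {x \<in> V. infdist x (frontier V) > s}"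

definition adj :: "pt \<Rightarrow> pt \<Rightarrow> bool" where
  "adj x y \<longleftrightarrow> \<bar>fst x - fst y\<bar> + \<bar>snd x - snd y\<bar> = 1"

definition inner_bd :: "pt set \<Rightarrow> pt set" where
  "inner_bd L = {x \<in> L. \<exists>y. y \<notin> L \<and> adj x y}"

definition lat_int :: "pt set \<Rightarrow> pt set" where
  "lat_int L = L - inner_bd L"

definition Lap :: "(pt \<Rightarrow> real) \<Rightarrow> pt \<Rightarrow> real" where
  "Lap f x = (1/4) * (\<Sum>y\<in>{y. adj x y}. (f x - f y))"

definition Cap :: "pt set \<Rightarrow> pt set \<Rightarrow> real" where
  "Cap W A = Inf {(1/2) * infsum (\<lambda>x. f x * Lap f x) UNIV | f.
                   (\<forall>x\<in>A. f x = 1) \<and> (\<forall>x. x \<notin> W \<longrightarrow> f x = 0)}"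

definition harm_ext :: "pt set \<Rightarrow> (pt \<Rightarrow> real) \<Rightarrow> pt \<Rightarrow> real" where
  "harm_ext D g = (THE f. (\<forall>x. x \<notin> D \<longrightarrow> f x = g x) \<and> (\<forall>x\<in>D. Lap f x = 0))"

definition steps :: "pt set" where
  "steps = {(1,0), (-1,0), (0,1), (0,-1)}"

text \<open>Law of the i.i.d. increment sequence.\<close>
definition SRW :: "pt stream measure" where
  "SRW = stream_space (measure_pmf (pmf_of_set steps))"

definition walk :: "pt \<Rightarrow> pt stream \<Rightarrow> nat \<Rightarrow> pt" where
  "walk x w t = (fst x + (\<Sum>i<t. fst (w !! i)), snd x + (\<Sum>i<t. snd (w !! i)))"

definition Pr :: "pt \<Rightarrow> ((nat \<Rightarrow> pt) \<Rightarrow> bool) \<Rightarrow> real" where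
  "Pr x E = measure SRW {w \<in> space SRW. E (walk x w)}"

definition Pr_init :: "pt set \<Rightarrow> (pt \<Rightarrow> real) \<Rightarrow> ((nat \<Rightarrow> pt) \<Rightarrow> bool) \<Rightarrow> real" where
  "Pr_init F mu E = (\<Sum>x\<in>F. mu x * Pr x E)"

definition hit :: "pt set \<Rightarrow> (nat \<Rightarrow> pt) \<Rightarrow> enat" where
  "hit A p = (if \<exists>t. p t \<in> A then enat (LEAST t. p t \<in> A) else \<infinity>)"

definition hitp :: "pt set \<Rightarrow> (nat \<Rightarrow> pt) \<Rightarrow> enat" where
  "hitp A p = (if \<exists>t\<ge>1. p t \<in> A then enat (LEAST t. t \<ge> 1 \<and> p t \<in> A) else \<infinity>)"

definition Green :: "pt set \<Rightarrow> pt \<Rightarrow> pt \<Rightarrow> real" where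
  "Green W x y = (\<Sum>t. Pr x (\<lambda>p. p t = y \<and> enat t < hit (- W) p))"

text \<open>h is a centered Gaussian field on (probability space) M, vanishing off the finite
  set W, with covariance C: every linear combination of the values on W is centered normal
  with the variance prescribed by C (a.s. zero if that variance is zero).\<close>
definition centered_gaussian_field ::
  "'a measure \<Rightarrow> pt set \<Rightarrow> (pt \<Rightarrow> pt \<Rightarrow> real) \<Rightarrow> (pt \<Rightarrow> 'a \<Rightarrow> real) \<Rightarrow> bool" where
  "centered_gaussian_field M W C h \<longleftrightarrow>
     prob_space M \<and> (\<forall>x. h x \<in> borel_measurable M) \<and>
     (\<forall>x. x \<notin> W \<longrightarrow> (\<forall>\<omega>\<in>space M. h x \<omega> = 0)) \<and>
     (\<forall>c :: pt \<Rightarrow> real.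
        let s = (\<Sum>x\<in>W. \<Sum>y\<in>W. c x * c y * C x y) in
        (s > 0 \<longrightarrow> distributed M lborel (\<lambda>\<omega>. \<Sum>x\<in>W. c x * h x \<omega>) (normal_density 0 (sqrt s))) \<and>
        (s \<le> 0 \<longrightarrow> (AE \<omega> in M. (\<Sum>x\<in>W. c x * h x \<omega>) = 0)))"

definition DGFF :: "'a measure \<Rightarrow> pt set \<Rightarrow> (pt \<Rightarrow> 'a \<Rightarrow> real) \<Rightarrow> bool" where
  "DGFF M WN h \<longleftrightarrow> centered_gaussian_field M WN (Green WN) h"

end

theory Submission
  imports Defs
begin

text \<open>On V_N the field phi is the harmonic extension of h from the inner boundary B of V_N, so
  phi(x) = sum_z Pi(x,z) h(z) with Pi the harmonic measure of B, and phibar = sum_z (gamma Pi)(z) h(z)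
  is a linear combination of the Gaussian field whose variance is the Green form of gamma Pi.
  For y in B the function G(., y) is harmonic inside V_N, so by symmetry of G
  sum_z (gamma Pi)(z) G(z,y) = sum_x gamma(x) G(y,x), and the last-exit decomposition gives
  sum_x G(y,x) e(x) = P^y(hit V_{N,r} before leaving W_N) for the escape probabilities
  e = 2 Cap gamma. All identities between lattice functions come from uniqueness for the
  discrete Dirichlet problem on a finite set; of the capacity only its nonnegativity is needed.\<close>

section \<open>The lattice and the discrete Laplacian\<close>

definition pt_add :: "pt \<Rightarrow> pt \<Rightarrow> pt" where
  "pt_add x s = (fst x + fst s, snd x + snd s)"

definition pt_neg :: "pt \<Rightarrow> pt" where
  "pt_neg s = (- fst s, - snd s)"

lemma pt_add_neg_cancel [simp]:
  "pt_add (pt_add x s) (pt_neg s) = x" "pt_add (pt_add x (pt_neg s)) s = x"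
  by (simp_all add: pt_add_def pt_neg_def)

lemma inj_pt_add: "inj (pt_add x)"
  by (auto simp: inj_def pt_add_def prod_eq_iff)

lemma finite_steps [simp]: "finite steps"
  and steps_not_empty [simp]: "steps \<noteq> {}"
  and card_steps [simp]: "card steps = 4"
  by (simp_all add: steps_def)

lemma pt_neg_steps: "pt_neg ` steps = steps" "inj_on pt_neg steps"
  by (auto simp: steps_def pt_neg_def inj_on_def)

lemma adj_eq_pt_add_steps: "{y. adj x y} = pt_add x ` steps"
proof -
  have "adj x y \<longleftrightarrow> y \<in> pt_add x ` steps" for y
  proof
    assume "adj x y"
    then have "y = (fst x + 1, snd x) \<or> y = (fst x - 1, snd x) \<or> y = (fst x, snd x + 1) \<or> y = (fst x, snd x - 1)"
      by (cases y) (auto simp: adj_def abs_if split: if_splits)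
    then show "y \<in> pt_add x ` steps" by (auto simp: steps_def pt_add_def)
  qed (auto simp: steps_def pt_add_def adj_def)
  then show ?thesis by auto
qed

lemma pt_add_mem_if_notin_inner_bd:
  "x \<in> A \<Longrightarrow> x \<notin> inner_bd A \<Longrightarrow> s \<in> steps \<Longrightarrow> pt_add x s \<in> A"
proof -
  assume "x \<in> A" "x \<notin> inner_bd A" "s \<in> steps"
  then have "adj x (pt_add x s)" using adj_eq_pt_add_steps[of x] by blast
  with \<open>x \<in> A\<close> \<open>x \<notin> inner_bd A\<close> show ?thesis unfolding inner_bd_def by blast
qed

lemma inner_bd_subset: "inner_bd A \<subseteq> A"
  by (auto simp: inner_bd_def)

definition nbr_sum :: "(pt \<Rightarrow> real) \<Rightarrow> pt \<Rightarrow> real" where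
  "nbr_sum u x = (\<Sum>s\<in>steps. u (pt_add x s))"

lemma nbr_sum_expand:
  "nbr_sum u x = u (fst x + 1, snd x) + u (fst x - 1, snd x) + u (fst x, snd x + 1) + u (fst x, snd x - 1)"
  by (simp add: nbr_sum_def steps_def pt_add_def)

lemma nbr_sum_mono:
  "(\<And>s. s \<in> steps \<Longrightarrow> u (pt_add x s) \<le> v (pt_add x s)) \<Longrightarrow> nbr_sum u x \<le> nbr_sum v x"
  unfolding nbr_sum_def by (rule sum_mono)

lemma Lap_eq_nbr_sum: "Lap f x = f x - nbr_sum f x / 4"
proof -
  have "Lap f x = (1/4) * (\<Sum>s\<in>steps. f x - f (pt_add x s))"
    by (simp add: Lap_def adj_eq_pt_add_steps sum.reindex inj_on_subset[OF inj_pt_add])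
  then show ?thesis
    by (simp add: sum_subtractf nbr_sum_def algebra_simps)
qed

lemma Lap_lincomb: "Lap (\<lambda>u. \<Sum>i\<in>F. c i * f i u) x = (\<Sum>i\<in>F. c i * Lap (f i) x)"
proof -
  have "nbr_sum (\<lambda>u. \<Sum>i\<in>F. c i * f i u) x = (\<Sum>i\<in>F. c i * nbr_sum (f i) x)"
    unfolding nbr_sum_def by (subst sum.swap) (simp add: sum_distrib_left)
  then show ?thesis
    by (simp add: Lap_eq_nbr_sum sum_subtractf sum_divide_distrib right_diff_distrib)
qed

lemma Lap_diff: "Lap (\<lambda>y. u y - v y) x = Lap u x - Lap v x"
  by (simp add: Lap_eq_nbr_sum nbr_sum_def sum_subtractf diff_divide_distrib)

lemma harmonic_le_0:
  assumes D: "finite D" and out: "\<And>x. x \<notin> D \<Longrightarrow> w x = 0"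
    and harm: "\<And>x. x \<in> D \<Longrightarrow> Lap w x = 0"
  shows "w x \<le> 0"
proof (rule ccontr)
  assume "\<not> w x \<le> 0"
  then have "x \<in> D" using out[of x] by (cases "x \<in> D") auto
  define m where "m = Max (w ` D)"
  have "m \<in> w ` D" unfolding m_def using D \<open>x \<in> D\<close> by (intro Max_in) auto
  then obtain y where "y \<in> D" and wy: "w y = m" by auto
  have "w x \<le> m" using D \<open>x \<in> D\<close> by (simp add: m_def)
  then have "m > 0" using \<open>\<not> w x \<le> 0\<close> by simp
  have le_m: "w z \<le> m" for z
    using out[of z] \<open>m > 0\<close> D by (cases "z \<in> D") (auto simp: m_def)
  have max_in_D: "z \<in> D" if "w z = m" for z
    using that out[of z] \<open>m > 0\<close> by (cases "z \<in> D") auto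
  \<comment> \<open>A positive maximum spreads to the right neighbour, hence along a ray that cannot stay in \<open>D\<close>.\<close>
  have spread: "w (pt_add z (1, 0)) = m" if "w z = m" for z
  proof -
    have "(\<Sum>s\<in>steps. m - w (pt_add z s)) = 0"
      using harm[OF max_in_D[OF that]] that by (simp add: Lap_eq_nbr_sum nbr_sum_def sum_subtractf)
    then have "\<forall>s\<in>steps. m - w (pt_add z s) = 0"
      by (subst (asm) sum_nonneg_eq_0_iff) (auto simp: le_m)
    then show ?thesis by (simp add: steps_def)
  qed
  have on_ray: "w (pt_add y (int n, 0)) = m" for n
  proof (induction n)
    case (Suc n)
    have "pt_add y (int (Suc n), 0) = pt_add (pt_add y (int n, 0)) (1, 0)"
      by (simp add: pt_add_def)
    then show ?case using spread[OF Suc] by simp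
  qed (simp add: pt_add_def wy)
  have "range (\<lambda>n. pt_add y (int n, 0)) \<subseteq> D"
    using max_in_D[OF on_ray] by blast
  moreover have "inj (\<lambda>n. pt_add y (int n, 0))"
    by (auto simp: inj_def pt_add_def)
  ultimately show False
    using D by (meson finite_imageD finite_subset infinite_UNIV_nat)
qed

lemma Dirichlet_problem_unique:
  assumes "finite D" and "\<And>x. x \<notin> D \<Longrightarrow> u x = v x" and "\<And>x. x \<in> D \<Longrightarrow> Lap u x = Lap v x"
  shows "u = v"
proof
  fix x
  have "u x - v x \<le> 0"
    by (rule harmonic_le_0[where w = "\<lambda>y. u y - v y"]) (use assms in \<open>auto simp: Lap_diff\<close>)
  moreover have "v x - u x \<le> 0"
    by (rule harmonic_le_0[where w = "\<lambda>y. v y - u y"]) (use assms in \<open>auto simp: Lap_diff\<close>)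
  ultimately show "u x = v x" by simp
qed

lemma sum_mult_shift:
  assumes W: "finite W" and f: "\<And>x. x \<notin> W \<Longrightarrow> f x = (0::real)" and g: "\<And>x. x \<notin> W \<Longrightarrow> g x = 0"
  shows "(\<Sum>x\<in>W. g x * f (pt_add x s)) = (\<Sum>x\<in>W. f x * g (pt_add x (pt_neg s)))"
proof -
  have f_expand: "f y = (\<Sum>z\<in>W. if z = y then f z else 0)"
    and g_expand: "g y = (\<Sum>z\<in>W. if z = y then g z else 0)" for y
    using f g W by (cases "y \<in> W"; simp add: sum.delta')+
  have "(\<Sum>x\<in>W. g x * f (pt_add x s)) = (\<Sum>x\<in>W. \<Sum>z\<in>W. g x * (if z = pt_add x s then f z else 0))"
    by (simp only: f_expand[of "pt_add _ s"] sum_distrib_left)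
  also have "\<dots> = (\<Sum>z\<in>W. \<Sum>x\<in>W. f z * (if x = pt_add z (pt_neg s) then g x else 0))"
    by (subst sum.swap) (intro sum.cong refl, auto)
  also have "\<dots> = (\<Sum>z\<in>W. f z * g (pt_add z (pt_neg s)))"
    by (simp only: g_expand[of "pt_add _ (pt_neg s)"] sum_distrib_left)
  finally show ?thesis .
qed

lemma nbr_sum_pt_neg: "(\<Sum>s\<in>steps. u (pt_add x (pt_neg s))) = nbr_sum u x"
  using sum.reindex[OF pt_neg_steps(2), of "\<lambda>s. u (pt_add x s)"] by (simp add: pt_neg_steps nbr_sum_def)

lemma sum_mult_Lap_symmetric:
  assumes W: "finite W" and f: "\<And>x. x \<notin> W \<Longrightarrow> f x = (0::real)" and g: "\<And>x. x \<notin> W \<Longrightarrow> g x = 0"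
  shows "(\<Sum>x\<in>W. g x * Lap f x) = (\<Sum>x\<in>W. f x * Lap g x)"
proof -
  have "(\<Sum>x\<in>W. g x * nbr_sum f x) = (\<Sum>s\<in>steps. \<Sum>x\<in>W. g x * f (pt_add x s))"
    by (simp add: nbr_sum_def sum_distrib_left sum.swap[of _ W])
  also have "\<dots> = (\<Sum>s\<in>steps. \<Sum>x\<in>W. f x * g (pt_add x (pt_neg s)))"
    by (intro sum.cong refl sum_mult_shift[OF W f g])
  also have "\<dots> = (\<Sum>x\<in>W. f x * nbr_sum g x)"
    by (simp add: nbr_sum_pt_neg[symmetric] sum_distrib_left sum.swap[of _ steps])
  finally show ?thesis
    by (simp add: Lap_eq_nbr_sum right_diff_distrib sum_subtractf sum_divide_distrib[symmetric] mult.commute)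
qed

lemma sum_mult_Lap_self_nonneg:
  assumes W: "finite W" and g: "\<And>x. x \<notin> W \<Longrightarrow> g x = (0::real)"
  shows "0 \<le> (\<Sum>x\<in>W. g x * Lap g x)"
proof -
  have shifted: "(\<Sum>x\<in>W. g x * g (pt_add x s)) \<le> (\<Sum>x\<in>W. (g x)\<^sup>2)" for s
  proof -
    have "(\<Sum>x\<in>W. (g (pt_add x s))\<^sup>2) = (\<Sum>x\<in>W. (g x)\<^sup>2 * indicator W (pt_add x (pt_neg s)))"
      using sum_mult_shift[OF W, of "\<lambda>y. (g y)\<^sup>2" "indicator W" s] g by simp
    also have "\<dots> \<le> (\<Sum>x\<in>W. (g x)\<^sup>2)"
      by (intro sum_mono) (auto simp: indicator_def)
    finally have sq: "(\<Sum>x\<in>W. (g (pt_add x s))\<^sup>2) \<le> (\<Sum>x\<in>W. (g x)\<^sup>2)" .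
    have "(\<Sum>x\<in>W. g x * g (pt_add x s)) \<le> (\<Sum>x\<in>W. ((g x)\<^sup>2 + (g (pt_add x s))\<^sup>2) / 2)"
    proof (intro sum_mono)
      fix x
      show "g x * g (pt_add x s) \<le> ((g x)\<^sup>2 + (g (pt_add x s))\<^sup>2) / 2"
        using sum_squares_bound[of "g x" "g (pt_add x s)"] by simp
    qed
    also have "\<dots> = ((\<Sum>x\<in>W. (g x)\<^sup>2) + (\<Sum>x\<in>W. (g (pt_add x s))\<^sup>2)) / 2"
      by (simp add: sum.distrib[symmetric] sum_divide_distrib)
    finally show ?thesis using sq by simp
  qed
  have "(\<Sum>x\<in>W. g x * nbr_sum g x) = (\<Sum>s\<in>steps. \<Sum>x\<in>W. g x * g (pt_add x s))"
    by (simp add: nbr_sum_def sum_distrib_left sum.swap[of _ W])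
  also have "\<dots> \<le> (\<Sum>s\<in>steps. \<Sum>x\<in>W. (g x)\<^sup>2)"
    by (intro sum_mono shifted)
  moreover have "(\<Sum>x\<in>W. g x * Lap g x) = (\<Sum>x\<in>W. (g x)\<^sup>2) - (\<Sum>x\<in>W. g x * nbr_sum g x) / 4"
    by (simp add: Lap_eq_nbr_sum right_diff_distrib sum_subtractf sum_divide_distrib power2_eq_square)
  ultimately show ?thesis by simp
qed

section \<open>The simple random walk\<close>

definition path_cons :: "pt \<Rightarrow> (nat \<Rightarrow> pt) \<Rightarrow> nat \<Rightarrow> pt" where
  "path_cons x p t = (case t of 0 \<Rightarrow> x | Suc n \<Rightarrow> p n)"

lemma path_cons_0 [simp]: "path_cons x p 0 = x"
  and path_cons_Suc [simp]: "path_cons x p (Suc n) = p n"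
  by (simp_all add: path_cons_def)

lemma space_SRW [simp]: "space SRW = UNIV"
  by (simp add: SRW_def space_stream_space streams_UNIV)

lemma prob_space_SRW: "prob_space SRW"
  unfolding SRW_def by (rule prob_space.prob_space_stream_space) (rule prob_space_measure_pmf)

lemma walk_0 [simp]: "walk x w 0 = x"
  by (simp add: walk_def)

lemma walk_Suc: "walk x w (Suc t) = pt_add (walk x w t) (w !! t)"
  by (simp add: walk_def pt_add_def)

lemma walk_Stream: "walk x (s ## w) = path_cons x (walk (pt_add x s) w)"
proof
  fix t
  show "walk x (s ## w) t = path_cons x (walk (pt_add x s) w) t"
    by (cases t) (simp_all add: walk_def path_cons_def pt_add_def sum.lessThan_Suc_shift del: sum.lessThan_Suc)
qed

lemma measurable_snth_SRW [measurable]: "(\<lambda>w. w !! n) \<in> SRW \<rightarrow>\<^sub>M count_space UNIV"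
proof -
  have "SRW \<rightarrow>\<^sub>M count_space UNIV = SRW \<rightarrow>\<^sub>M measure_pmf (pmf_of_set steps)"
    by (rule measurable_cong_sets) simp_all
  then show ?thesis unfolding SRW_def using measurable_snth by auto
qed

lemma measurable_walk [measurable]: "(\<lambda>w. walk x w t) \<in> SRW \<rightarrow>\<^sub>M count_space UNIV"
proof (induction t)
  case (Suc t)
  have "(\<lambda>w. (\<lambda>b w. pt_add b (w !! t)) (walk x w t) w) \<in> SRW \<rightarrow>\<^sub>M count_space UNIV"
    by (rule measurable_compose_countable[OF _ Suc]) (rule measurable_compose[OF measurable_snth_SRW], simp)
  then show ?case by (simp add: walk_Suc)
qed simp

lemma measurable_Stream_SRW: "(\<lambda>w. s ## w) \<in> SRW \<rightarrow>\<^sub>M SRW"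
  unfolding SRW_def by (rule measurable_Stream) simp_all

lemma sets_SRW_countable_rel:
  fixes f :: "pt stream \<Rightarrow> 'a::countable" and g :: "pt stream \<Rightarrow> 'b::countable"
  assumes f: "f \<in> SRW \<rightarrow>\<^sub>M count_space UNIV" and g: "g \<in> SRW \<rightarrow>\<^sub>M count_space UNIV"
  shows "{w \<in> space SRW. R (f w) (g w)} \<in> sets SRW"
proof -
  have "(\<lambda>w. (\<lambda>a w. (\<lambda>b w. R a b) (g w) w) (f w) w) \<in> SRW \<rightarrow>\<^sub>M count_space UNIV"
    by (rule measurable_compose_countable[OF _ f], rule measurable_compose_countable[OF _ g]) simp
  then have "(\<lambda>w. R (f w) (g w)) -` {True} \<inter> space SRW \<in> sets SRW"
    by (rule measurable_sets) simp
  moreover have "(\<lambda>w. R (f w) (g w)) -` {True} \<inter> space SRW = {w \<in> space SRW. R (f w) (g w)}"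
    by auto
  ultimately show ?thesis by simp
qed

lemma Pr_nonneg: "0 \<le> Pr x E"
  by (simp add: Pr_def)

lemma Pr_eq_1I: "(\<And>w. E (walk x w)) \<Longrightarrow> Pr x E = 1"
  using prob_space.prob_space[OF prob_space_SRW] by (simp add: Pr_def)

lemma Pr_eq_0I: "(\<And>w. \<not> E (walk x w)) \<Longrightarrow> Pr x E = 0"
  by (simp add: Pr_def)

lemma Pr_first_step:
  assumes meas: "{w \<in> space SRW. E (walk x w)} \<in> sets SRW"
  shows "Pr x E = (\<Sum>s\<in>steps. Pr (pt_add x s) (\<lambda>p. E (path_cons x p))) / 4"
proof -
  interpret P: prob_space SRW by (rule prob_space_SRW)
  define S where "S = {w \<in> space SRW. E (walk x w)}"
  define T where "T s = {w \<in> space SRW. E (path_cons x (walk (pt_add x s) w))}" for s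
  have S [measurable]: "S \<in> sets SRW" using meas by (simp add: S_def)
  have T: "T s \<in> sets SRW" for s
  proof -
    have "T s = (\<lambda>w. s ## w) -` S \<inter> space SRW"
      by (auto simp: T_def S_def walk_Stream)
    then show ?thesis using measurable_sets[OF measurable_Stream_SRW S] by simp
  qed
  have indicator_Stream: "indicator S (s ## w) = (indicator (T s) w :: ennreal)" for s w
    by (simp add: S_def T_def walk_Stream indicator_def)
  have "emeasure SRW S = (\<integral>\<^sup>+w. indicator S w \<partial>SRW)"
    by simp
  also have "\<dots> = (\<integral>\<^sup>+s. (\<integral>\<^sup>+w. indicator S (s ## w) \<partial>SRW) \<partial>measure_pmf (pmf_of_set steps))"
    unfolding SRW_def
    by (rule prob_space.nn_integral_stream_space[OF prob_space_measure_pmf])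
       (use S in \<open>simp add: SRW_def\<close>)
  also have "\<dots> = (\<integral>\<^sup>+s. emeasure SRW (T s) \<partial>measure_pmf (pmf_of_set steps))"
    by (simp add: indicator_Stream T)
  also have "\<dots> = (\<Sum>s\<in>steps. emeasure SRW (T s) * ennreal (1/4))"
    by (subst nn_integral_measure_pmf_finite) (auto simp: indicator_def)
  also have "\<dots> = (\<Sum>s\<in>steps. ennreal (measure SRW (T s) / 4))"
    by (simp add: P.emeasure_eq_measure ennreal_mult[symmetric])
  also have "\<dots> = ennreal ((\<Sum>s\<in>steps. measure SRW (T s)) / 4)"
    by (simp add: sum_ennreal sum_divide_distrib)
  finally have "measure SRW S = (\<Sum>s\<in>steps. measure SRW (T s)) / 4"
    by (simp add: P.emeasure_eq_measure sum_nonneg)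
  then show ?thesis by (simp add: Pr_def S_def T_def)
qed

section \<open>Hitting times and hitting probabilities\<close>

lemma hit_eq_enat_iff: "hit A p = enat n \<longleftrightarrow> p n \<in> A \<and> (\<forall>t<n. p t \<notin> A)"
proof
  assume "hit A p = enat n"
  then have "\<exists>t. p t \<in> A" and "n = (LEAST t. p t \<in> A)"
    by (auto simp: hit_def split: if_splits)
  then show "p n \<in> A \<and> (\<forall>t<n. p t \<notin> A)"
    by (metis LeastI not_less_Least)
next
  assume "p n \<in> A \<and> (\<forall>t<n. p t \<notin> A)"
  then have "(LEAST t. p t \<in> A) = n"
    by (intro Least_equality) (auto simp: not_less[symmetric])
  then show "hit A p = enat n"
    using \<open>p n \<in> A \<and> _\<close> by (auto simp: hit_def)
qed

lemma hit_eq_infinity_iff: "hit A p = \<infinity> \<longleftrightarrow> (\<forall>t. p t \<notin> A)"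
  by (auto simp: hit_def)

lemma hit_eq_0_iff: "hit A p = 0 \<longleftrightarrow> p 0 \<in> A"
  using hit_eq_enat_iff[of A p 0] by (simp add: enat_0)

lemma hitp_eq_enat_iff: "hitp A p = enat n \<longleftrightarrow> 1 \<le> n \<and> p n \<in> A \<and> (\<forall>t<n. 1 \<le> t \<longrightarrow> p t \<notin> A)"
proof
  assume "hitp A p = enat n"
  then have "\<exists>t. 1 \<le> t \<and> p t \<in> A" and "n = (LEAST t. 1 \<le> t \<and> p t \<in> A)"
    by (auto simp: hitp_def split: if_splits)
  then show "1 \<le> n \<and> p n \<in> A \<and> (\<forall>t<n. 1 \<le> t \<longrightarrow> p t \<notin> A)"
    by (metis (mono_tags, lifting) LeastI not_less_Least)
next
  assume "1 \<le> n \<and> p n \<in> A \<and> (\<forall>t<n. 1 \<le> t \<longrightarrow> p t \<notin> A)"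
  then have "(LEAST t. 1 \<le> t \<and> p t \<in> A) = n"
    by (intro Least_equality) (auto simp: not_less[symmetric])
  then show "hitp A p = enat n"
    using \<open>1 \<le> n \<and> _\<close> by (auto simp: hitp_def)
qed

lemma hitp_eq_infinity_iff: "hitp A p = \<infinity> \<longleftrightarrow> (\<forall>t\<ge>1. p t \<notin> A)"
  by (auto simp: hitp_def)

lemma measurable_hit [measurable]: "(\<lambda>w. hit A (walk x w)) \<in> SRW \<rightarrow>\<^sub>M count_space UNIV"
  unfolding measurable_count_space_eq2_countable
proof safe
  fix a :: enat
  show "(\<lambda>w. hit A (walk x w)) -` {a} \<inter> space SRW \<in> sets SRW"
  proof (cases a)
    case (enat n)
    have "{w \<in> space SRW. walk x w n \<in> A \<and> (\<forall>t<n. walk x w t \<notin> A)} \<in> sets SRW"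
      by measurable
    then show ?thesis by (simp add: enat hit_eq_enat_iff vimage_def Int_def)
  next
    case infinity
    have "{w \<in> space SRW. \<forall>t. walk x w t \<notin> A} \<in> sets SRW"
      by measurable
    then show ?thesis by (simp add: infinity hit_eq_infinity_iff vimage_def Int_def)
  qed
qed simp

lemma measurable_hitp [measurable]: "(\<lambda>w. hitp A (walk x w)) \<in> SRW \<rightarrow>\<^sub>M count_space UNIV"
  unfolding measurable_count_space_eq2_countable
proof safe
  fix a :: enat
  show "(\<lambda>w. hitp A (walk x w)) -` {a} \<inter> space SRW \<in> sets SRW"
  proof (cases a)
    case (enat n)
    have "{w \<in> space SRW. 1 \<le> n \<and> walk x w n \<in> A \<and> (\<forall>t<n. 1 \<le> t \<longrightarrow> walk x w t \<notin> A)} \<in> sets SRW"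
      by measurable
    then show ?thesis by (simp add: enat hitp_eq_enat_iff vimage_def Int_def)
  next
    case infinity
    have "{w \<in> space SRW. \<forall>t\<ge>1. walk x w t \<notin> A} \<in> sets SRW"
      by measurable
    then show ?thesis by (simp add: infinity hitp_eq_infinity_iff vimage_def Int_def)
  qed
qed simp

lemma eSuc_eq_infinity_iff [simp]: "eSuc a = \<infinity> \<longleftrightarrow> a = \<infinity>"
  by (metis eSuc_infinity eSuc_inject)

lemma hit_path_cons: "hit A (path_cons x p) = (if x \<in> A then 0 else eSuc (hit A p))"
proof (cases "x \<in> A")
  case True
  then show ?thesis by (simp add: hit_eq_0_iff)
next
  case False
  show ?thesis
  proof (cases "hit A p")
    case (enat n)
    then have "hit A (path_cons x p) = enat (Suc n)"
      using False by (auto simp: hit_eq_enat_iff path_cons_def less_Suc_eq_0_disj)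
    then show ?thesis using False enat by (simp add: eSuc_enat)
  next
    case infinity
    then have "hit A (path_cons x p) = \<infinity>"
      using False by (auto simp: hit_eq_infinity_iff path_cons_def split: nat.splits)
    then show ?thesis using False infinity by simp
  qed
qed

lemma hitp_path_cons: "hitp A (path_cons x p) = eSuc (hit A p)"
proof (cases "hit A p")
  case (enat n)
  then have "hitp A (path_cons x p) = enat (Suc n)"
    by (auto simp: hitp_eq_enat_iff hit_eq_enat_iff path_cons_def less_Suc_eq_0_disj)
  then show ?thesis using enat by (simp add: eSuc_enat)
next
  case infinity
  then have "hitp A (path_cons x p) = \<infinity>"
    by (auto simp: hitp_eq_infinity_iff hit_eq_infinity_iff path_cons_def split: nat.splits)
  then show ?thesis using infinity by simp
qed

definition hit_before :: "pt set \<Rightarrow> pt set \<Rightarrow> pt \<Rightarrow> real" where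
  "hit_before A B x = Pr x (\<lambda>p. hit A p < hit B p)"

lemma hit_before_nonneg: "0 \<le> hit_before A B x"
  by (simp add: hit_before_def Pr_nonneg)

lemma hit_before_start_in:
  assumes "x \<in> A" "x \<notin> B"
  shows "hit_before A B x = 1"
  unfolding hit_before_def
proof (rule Pr_eq_1I)
  fix w
  have "hit A (walk x w) = 0" "hit B (walk x w) \<noteq> 0"
    using assms by (simp_all add: hit_eq_0_iff)
  then show "hit A (walk x w) < hit B (walk x w)" by (simp add: gr_zeroI)
qed

lemma hit_before_start_out: "x \<in> B \<Longrightarrow> hit_before A B x = 0"
  unfolding hit_before_def by (rule Pr_eq_0I) (simp add: hit_eq_0_iff[THEN iffD2])

lemma Lap_hit_before: "x \<notin> A \<Longrightarrow> x \<notin> B \<Longrightarrow> Lap (hit_before A B) x = 0"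
proof -
  assume "x \<notin> A" "x \<notin> B"
  have "hit_before A B x = (\<Sum>s\<in>steps. Pr (pt_add x s) (\<lambda>p. hit A (path_cons x p) < hit B (path_cons x p))) / 4"
    unfolding hit_before_def by (rule Pr_first_step) (intro sets_SRW_countable_rel measurable_hit)
  also have "\<dots> = nbr_sum (hit_before A B) x / 4"
    using \<open>x \<notin> A\<close> \<open>x \<notin> B\<close> by (simp add: nbr_sum_def hit_before_def hit_path_cons)
  finally show ?thesis by (simp add: Lap_eq_nbr_sum)
qed

lemma Pr_never_exit:
  assumes "finite W"
  shows "Pr x (\<lambda>p. hit (- W) p = \<infinity>) = 0"
proof -
  define q where "q y = Pr y (\<lambda>p. hit (- W) p = \<infinity>)" for y
  have "q = (\<lambda>_. 0)"
  proof (rule Dirichlet_problem_unique[OF assms])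
    fix y assume "y \<notin> W"
    show "q y = 0"
      unfolding q_def by (rule Pr_eq_0I) (use \<open>y \<notin> W\<close> in \<open>simp add: hit_eq_0_iff[THEN iffD2]\<close>)
  next
    fix y assume "y \<in> W"
    have "q y = (\<Sum>s\<in>steps. Pr (pt_add y s) (\<lambda>p. hit (- W) (path_cons y p) = \<infinity>)) / 4"
      unfolding q_def
      by (rule Pr_first_step, rule sets_SRW_countable_rel[OF measurable_hit measurable_count_space_const])
    also have "\<dots> = nbr_sum q y / 4"
      using \<open>y \<in> W\<close> by (simp add: nbr_sum_def q_def hit_path_cons)
    finally show "Lap q y = Lap (\<lambda>_. 0) y"
      by (simp add: Lap_eq_nbr_sum nbr_sum_def)
  qed
  then show ?thesis by (metis q_def)
qed

lemma hit_before_complement: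
  assumes "A \<inter> B = {}" and null: "Pr x (\<lambda>p. hit B p = \<infinity>) = 0"
  shows "hit_before A B x + hit_before B A x = 1"
proof -
  interpret P: prob_space SRW by (rule prob_space_SRW)
  define S1 where "S1 = {w \<in> space SRW. hit A (walk x w) < hit B (walk x w)}"
  define S2 where "S2 = {w \<in> space SRW. hit B (walk x w) < hit A (walk x w)}"
  define S3 where "S3 = {w \<in> space SRW. hit B (walk x w) = \<infinity>}"
  have sets: "S1 \<in> sets SRW" "S2 \<in> sets SRW" "S3 \<in> sets SRW"
    unfolding S1_def S2_def S3_def
    by (rule sets_SRW_countable_rel[OF measurable_hit measurable_hit]
        sets_SRW_countable_rel[OF measurable_hit measurable_count_space_const])+
  have "space SRW - (S1 \<union> S2) \<subseteq> S3"
  proof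
    fix w assume w: "w \<in> space SRW - (S1 \<union> S2)"
    then have same: "hit A (walk x w) = hit B (walk x w)" by (auto simp: S1_def S2_def)
    show "w \<in> S3"
    proof (cases "hit B (walk x w)")
      case (enat n)
      then have "walk x w n \<in> A" "walk x w n \<in> B"
        using same hit_eq_enat_iff by metis+
      then show ?thesis using assms(1) by auto
    qed (simp add: S3_def)
  qed
  then have "P.prob (space SRW - (S1 \<union> S2)) \<le> 0"
    using P.finite_measure_mono[OF _ sets(3)] null by (simp add: Pr_def S3_def)
  then have "1 \<le> P.prob (S1 \<union> S2)"
    using P.prob_compl[of "S1 \<union> S2"] sets by simp
  then have "P.prob (S1 \<union> S2) = 1"
    using P.prob_le_1 by (intro antisym)
  moreover have "S1 \<inter> S2 = {}" by (auto simp: S1_def S2_def)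
  ultimately have "P.prob S1 + P.prob S2 = 1"
    using P.finite_measure_Union[OF sets(1,2)] by simp
  then show ?thesis by (simp add: hit_before_def Pr_def S1_def S2_def)
qed

section \<open>The Green function of the killed walk\<close>

definition killed_prob :: "pt set \<Rightarrow> pt \<Rightarrow> nat \<Rightarrow> pt \<Rightarrow> real" where
  "killed_prob W y t x = Pr x (\<lambda>p. p t = y \<and> enat t < hit (- W) p)"

lemma Green_eq_suminf: "Green W x y = (\<Sum>t. killed_prob W y t x)"
  by (simp add: Green_def killed_prob_def)

lemma killed_prob_nonneg: "0 \<le> killed_prob W y t x"
  by (simp add: killed_prob_def Pr_nonneg)

lemma killed_prob_outside: "x \<notin> W \<Longrightarrow> killed_prob W y t x = 0"
  unfolding killed_prob_def by (rule Pr_eq_0I) (simp add: hit_eq_0_iff[THEN iffD2])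

lemma killed_prob_0: "x \<in> W \<Longrightarrow> killed_prob W y 0 x = (if x = y then 1 else 0)"
proof -
  assume "x \<in> W"
  then have "hit (- W) (walk x w) \<noteq> 0" for w
    by (simp add: hit_eq_0_iff)
  then show ?thesis
    unfolding killed_prob_def by (auto intro!: Pr_eq_1I Pr_eq_0I simp: zero_enat_def[symmetric] gr_zeroI)
qed

lemma killed_prob_Suc: "x \<in> W \<Longrightarrow> killed_prob W y (Suc n) x = nbr_sum (killed_prob W y n) x / 4"
proof -
  assume "x \<in> W"
  have "killed_prob W y (Suc n) x
      = (\<Sum>s\<in>steps. Pr (pt_add x s) (\<lambda>p. path_cons x p (Suc n) = y \<and> enat (Suc n) < hit (- W) (path_cons x p))) / 4"
    unfolding killed_prob_def
    by (rule Pr_first_step, rule sets_SRW_countable_rel[OF measurable_walk measurable_hit])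
  then show ?thesis
    using \<open>x \<in> W\<close> by (simp add: nbr_sum_def killed_prob_def hit_path_cons eSuc_enat[symmetric])
qed

lemma summable_killed_prob:
  assumes W: "finite W"
  shows "summable (\<lambda>t. killed_prob W y t x)"
proof (cases "x \<in> W")
  case False
  then show ?thesis by (simp add: killed_prob_outside)
next
  case True
  text \<open>\<open>g = K - |z|\<^sup>2\<close> is nonnegative on \<open>W\<close> and its neighbour average is \<open>g - 1\<close>, so it dominates
    the expected number of steps spent in \<open>W\<close> before exiting.\<close>
  define sq :: "pt \<Rightarrow> real" where "sq z = (real_of_int (fst z))\<^sup>2 + (real_of_int (snd z))\<^sup>2" for z
  define K where "K = (\<Sum>z\<in>W. sq z) + (\<Sum>z\<in>W. nbr_sum sq z)"
  define g where "g z = K - sq z" for z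
  have sq_nonneg: "0 \<le> sq z" for z
    by (simp add: sq_def)
  have g_nonneg: "0 \<le> g z" if "z \<in> W" for z
  proof -
    have "0 \<le> (\<Sum>z\<in>W. nbr_sum sq z)"
      by (intro sum_nonneg) (simp add: nbr_sum_def sum_nonneg sq_nonneg)
    then show ?thesis
      using member_le_sum[of z W sq] that W sq_nonneg by (simp add: g_def K_def)
  qed
  have g_nbr_nonneg: "0 \<le> g (pt_add z s)" if "z \<in> W" "s \<in> steps" for z s
  proof -
    have "sq (pt_add z s) \<le> nbr_sum sq z"
      unfolding nbr_sum_def using that sq_nonneg by (intro member_le_sum) auto
    also have "\<dots> \<le> (\<Sum>z\<in>W. nbr_sum sq z)"
      using that W sq_nonneg by (intro member_le_sum) (auto simp: nbr_sum_def sum_nonneg)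
    finally show ?thesis
      using sum_nonneg[of W sq] sq_nonneg by (simp add: g_def K_def)
  qed
  have nbr_sum_g: "nbr_sum g z = 4 * g z - 4" for z
    by (simp add: nbr_sum_expand g_def sq_def power2_eq_square algebra_simps)
  have partial_sums_le: "\<forall>z\<in>W. (\<Sum>t<T. killed_prob W y t z) \<le> g z" for T
  proof (induction T)
    case 0
    then show ?case using g_nonneg by simp
  next
    case (Suc T)
    show ?case
    proof
      fix z assume "z \<in> W"
      have "(\<Sum>t<Suc T. killed_prob W y t z) = killed_prob W y 0 z + (\<Sum>t<T. killed_prob W y (Suc t) z)"
        by (simp add: sum.lessThan_Suc_shift del: sum.lessThan_Suc)
      also have "(\<Sum>t<T. killed_prob W y (Suc t) z) = nbr_sum (\<lambda>v. \<Sum>t<T. killed_prob W y t v) z / 4"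
        using \<open>z \<in> W\<close>
        by (simp add: killed_prob_Suc nbr_sum_def sum_divide_distrib[symmetric] sum.swap[of _ steps])
      also have "nbr_sum (\<lambda>v. \<Sum>t<T. killed_prob W y t v) z \<le> nbr_sum g z"
      proof (rule nbr_sum_mono)
        fix s assume "s \<in> steps"
        then show "(\<Sum>t<T. killed_prob W y t (pt_add z s)) \<le> g (pt_add z s)"
          using Suc.IH g_nbr_nonneg[OF \<open>z \<in> W\<close>] by (cases "pt_add z s \<in> W") (auto simp: killed_prob_outside)
      qed
      moreover have "killed_prob W y 0 z \<le> 1"
        using killed_prob_0[OF \<open>z \<in> W\<close>] by simp
      ultimately show "(\<Sum>t<Suc T. killed_prob W y t z) \<le> g z"
        using nbr_sum_g[of z] by linarith
    qed
  qed
  show ?thesis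
    using partial_sums_le True killed_prob_nonneg by (intro summableI_nonneg_bounded[where x = "g x"]) auto
qed

lemma Green_outside: "x \<notin> W \<Longrightarrow> Green W x y = 0"
  by (simp add: Green_eq_suminf killed_prob_outside)

lemma Lap_Green:
  assumes W: "finite W" and "x \<in> W"
  shows "Lap (\<lambda>z. Green W z y) x = (if x = y then 1 else 0)"
proof -
  have summable: "summable (\<lambda>t. killed_prob W y t z)" for z
    by (rule summable_killed_prob[OF W])
  have "Green W x y = killed_prob W y 0 x + (\<Sum>t. killed_prob W y (Suc t) x)"
    unfolding Green_eq_suminf using suminf_split_head[OF summable] by simp
  also have "(\<Sum>t. killed_prob W y (Suc t) x) = (\<Sum>t. nbr_sum (killed_prob W y t) x) / 4"
    using \<open>x \<in> W\<close> by (simp add: killed_prob_Suc suminf_divide nbr_sum_def summable_sum[OF summable])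
  also have "(\<Sum>t. nbr_sum (killed_prob W y t) x) = nbr_sum (\<lambda>z. Green W z y) x"
    unfolding nbr_sum_def Green_eq_suminf by (rule suminf_sum[OF summable])
  finally show ?thesis
    using killed_prob_0[OF \<open>x \<in> W\<close>] by (simp add: Lap_eq_nbr_sum)
qed

lemma Green_sym:
  assumes W: "finite W"
  shows "Green W a b = Green W b a"
proof -
  have pairing: "(\<Sum>x\<in>W. Green W x c * Lap (\<lambda>z. Green W z d) x) = Green W d c" for c d
  proof -
    have "(\<Sum>x\<in>W. Green W x c * Lap (\<lambda>z. Green W z d) x) = (\<Sum>x\<in>W. if x = d then Green W x c else 0)"
      by (intro sum.cong refl) (simp add: Lap_Green[OF W])
    also have "\<dots> = Green W d c"
      using W by (simp add: sum.delta' Green_outside)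
    finally show ?thesis .
  qed
  have "(\<Sum>x\<in>W. Green W x a * Lap (\<lambda>z. Green W z b) x) = (\<Sum>x\<in>W. Green W x b * Lap (\<lambda>z. Green W z a) x)"
    by (rule sum_mult_Lap_symmetric[OF W]) (simp_all add: Green_outside)
  then show ?thesis
    by (simp add: pairing)
qed

section \<open>Escape probabilities and the last-exit decomposition\<close>

definition escape_prob :: "pt set \<Rightarrow> pt set \<Rightarrow> pt \<Rightarrow> real" where
  "escape_prob W A x = Pr x (\<lambda>p. hit (- W) p < hitp A p)"

lemma escape_prob_nonneg: "0 \<le> escape_prob W A x"
  by (simp add: escape_prob_def Pr_nonneg)

lemma escape_prob_first_step:
  assumes W: "finite W" and "A \<subseteq> W" and "x \<in> W"
  shows "escape_prob W A x = 1 - nbr_sum (hit_before A (- W)) x / 4"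
proof -
  have "escape_prob W A x
      = (\<Sum>s\<in>steps. Pr (pt_add x s) (\<lambda>p. hit (- W) (path_cons x p) < hitp A (path_cons x p))) / 4"
    unfolding escape_prob_def
    by (rule Pr_first_step, rule sets_SRW_countable_rel[OF measurable_hit measurable_hitp])
  also have "\<dots> = nbr_sum (hit_before (- W) A) x / 4"
    using \<open>x \<in> W\<close> by (simp add: nbr_sum_def hit_before_def hit_path_cons hitp_path_cons)
  also have "hit_before (- W) A = (\<lambda>y. 1 - hit_before A (- W) y)"
  proof
    fix y
    have "hit_before A (- W) y + hit_before (- W) A y = 1"
      using \<open>A \<subseteq> W\<close> Pr_never_exit[OF W] by (intro hit_before_complement) auto
    then show "hit_before (- W) A y = 1 - hit_before A (- W) y" by simp
  qed
  finally show ?thesis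
    by (simp add: nbr_sum_def sum_subtractf)
qed

lemma Lap_hit_before_exit:
  assumes W: "finite W" and "A \<subseteq> W" and "u \<in> W"
  shows "Lap (hit_before A (- W)) u = (if u \<in> inner_bd A then escape_prob W A u else 0)"
proof (cases "u \<in> A")
  case True
  then have "Lap (hit_before A (- W)) u = escape_prob W A u"
    using escape_prob_first_step[OF assms] \<open>u \<in> W\<close>
    by (simp add: Lap_eq_nbr_sum hit_before_start_in)
  moreover have "escape_prob W A u = 0" if "u \<notin> inner_bd A"
  proof -
    have "nbr_sum (hit_before A (- W)) u = (\<Sum>s\<in>steps. 1)"
      unfolding nbr_sum_def using pt_add_mem_if_notin_inner_bd[OF True that] \<open>A \<subseteq> W\<close>
      by (intro sum.cong refl hit_before_start_in) auto
    then show ?thesis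
      using escape_prob_first_step[OF assms] by simp
  qed
  ultimately show ?thesis by auto
next
  case False
  then show ?thesis
    using \<open>u \<in> W\<close> inner_bd_subset[of A] by (auto intro: Lap_hit_before)
qed

text \<open>A walk started at \<open>u\<close> that hits \<open>A\<close> before leaving \<open>W\<close> does so for a last time, at some
  \<open>x \<in> \<partial>\<^sup>i\<^sup>n A\<close> from which it then escapes; both sides solve the same Dirichlet problem on \<open>W\<close>.\<close>
lemma hit_before_last_exit:
  assumes W: "finite W" and "A \<subseteq> W"
  shows "hit_before A (- W) u = (\<Sum>x\<in>inner_bd A. Green W u x * escape_prob W A x)"
proof -
  have fin: "finite (inner_bd A)"
    using W \<open>A \<subseteq> W\<close> inner_bd_subset by (metis finite_subset)
  have "hit_before A (- W) = (\<lambda>u. \<Sum>x\<in>inner_bd A. escape_prob W A x * Green W u x)"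
  proof (rule Dirichlet_problem_unique[OF W])
    fix u assume "u \<notin> W"
    then show "hit_before A (- W) u = (\<Sum>x\<in>inner_bd A. escape_prob W A x * Green W u x)"
      by (simp add: hit_before_start_out Green_outside)
  next
    fix u assume "u \<in> W"
    have "Lap (\<lambda>u. \<Sum>x\<in>inner_bd A. escape_prob W A x * Green W u x) u
        = (\<Sum>x\<in>inner_bd A. escape_prob W A x * Lap (\<lambda>z. Green W z x) u)"
      by (rule Lap_lincomb)
    also have "\<dots> = (\<Sum>x\<in>inner_bd A. if u = x then escape_prob W A x else 0)"
      by (intro sum.cong refl) (simp add: Lap_Green[OF W \<open>u \<in> W\<close>])
    also have "\<dots> = Lap (hit_before A (- W)) u"
      using fin by (simp add: Lap_hit_before_exit[OF W \<open>A \<subseteq> W\<close> \<open>u \<in> W\<close>])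
    finally show "Lap (hit_before A (- W)) u = Lap (\<lambda>u. \<Sum>x\<in>inner_bd A. escape_prob W A x * Green W u x) u"
      by simp
  qed
  then show ?thesis
    by (simp add: mult.commute)
qed

lemma Cap_nonneg:
  assumes W: "finite W" and "A \<subseteq> W"
  shows "0 \<le> Cap W A"
proof -
  define S where "S = {(1/2) * infsum (\<lambda>x. f x * Lap f x) UNIV | f.
      (\<forall>x\<in>A. f x = 1) \<and> (\<forall>x. x \<notin> W \<longrightarrow> f x = 0)}"
  let ?f = "\<lambda>x. if x \<in> W then 1 else 0 :: real"
  have "(1/2) * infsum (\<lambda>x. ?f x * Lap ?f x) UNIV \<in> S"
    unfolding S_def by (rule CollectI, rule exI[of _ ?f]) (use \<open>A \<subseteq> W\<close> in auto)
  moreover have "0 \<le> e" if "e \<in> S" for e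
  proof -
    obtain f where e: "e = (1/2) * infsum (\<lambda>x. f x * Lap f x) UNIV"
      and f_out: "\<And>x. x \<notin> W \<Longrightarrow> f x = 0"
      using \<open>e \<in> S\<close> unfolding S_def by blast
    have "infsum (\<lambda>x. f x * Lap f x) UNIV = (\<Sum>x\<in>W. f x * Lap f x)"
      by (rule infsum_cong_neutral[where T = W, THEN trans]) (simp_all add: f_out W)
    then show "0 \<le> e"
      using sum_mult_Lap_self_nonneg[of W f] W f_out e by simp
  qed
  ultimately show ?thesis
    unfolding Cap_def S_def[symmetric] by (intro cInf_greatest) auto
qed

section \<open>Harmonic measure and harmonic extension\<close>

definition harm_measure :: "pt set \<Rightarrow> pt \<Rightarrow> pt \<Rightarrow> real" where
  "harm_measure B x z = Pr x (\<lambda>p. hit B p \<noteq> \<infinity> \<and> p (the_enat (hit B p)) = z)"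

lemma harm_measure_nonneg: "0 \<le> harm_measure B x z"
  by (simp add: harm_measure_def Pr_nonneg)

lemma harm_measure_start_in: "x \<in> B \<Longrightarrow> harm_measure B x z = (if x = z then 1 else 0)"
proof -
  assume "x \<in> B"
  then have "hit B (walk x w) = 0" for w
    by (simp add: hit_eq_0_iff)
  then show ?thesis
    unfolding harm_measure_def by (auto intro!: Pr_eq_1I Pr_eq_0I simp: zero_enat_def)
qed

lemma harm_measure_notin: "z \<notin> B \<Longrightarrow> harm_measure B x z = 0"
  unfolding harm_measure_def
proof (rule Pr_eq_0I)
  fix w assume "z \<notin> B"
  show "\<not> (hit B (walk x w) \<noteq> \<infinity> \<and> walk x w (the_enat (hit B (walk x w))) = z)"
  proof
    assume hit: "hit B (walk x w) \<noteq> \<infinity> \<and> walk x w (the_enat (hit B (walk x w))) = z"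
    then obtain n where n: "hit B (walk x w) = enat n" by auto
    then have "walk x w n \<in> B" using hit_eq_enat_iff by blast
    then show False using hit n \<open>z \<notin> B\<close> by simp
  qed
qed

lemma Lap_harm_measure: "x \<notin> B \<Longrightarrow> Lap (\<lambda>y. harm_measure B y z) x = 0"
proof -
  assume "x \<notin> B"
  have measurable: "(\<lambda>w. walk x w (the_enat (hit B (walk x w)))) \<in> SRW \<rightarrow>\<^sub>M count_space UNIV"
    by (rule measurable_compose_countable[where f = "\<lambda>t w. walk x w (the_enat t)", OF _ measurable_hit]) simp
  have "harm_measure B x z = (\<Sum>s\<in>steps. Pr (pt_add x s)
      (\<lambda>p. hit B (path_cons x p) \<noteq> \<infinity> \<and> path_cons x p (the_enat (hit B (path_cons x p))) = z)) / 4"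
    unfolding harm_measure_def
    by (rule Pr_first_step, rule sets_SRW_countable_rel[OF measurable_hit measurable])
  also have "\<dots> = nbr_sum (\<lambda>y. harm_measure B y z) x / 4"
  proof -
    have "(hit B (path_cons x p) \<noteq> \<infinity> \<and> path_cons x p (the_enat (hit B (path_cons x p))) = z)
        = (hit B p \<noteq> \<infinity> \<and> p (the_enat (hit B p)) = z)" for p
      using \<open>x \<notin> B\<close> by (cases "hit B p") (simp_all add: hit_path_cons eSuc_enat)
    then show ?thesis by (simp add: nbr_sum_def harm_measure_def)
  qed
  finally show ?thesis by (simp add: Lap_eq_nbr_sum)
qed

definition harm_avg :: "pt set \<Rightarrow> (pt \<Rightarrow> real) \<Rightarrow> pt \<Rightarrow> real" where
  "harm_avg B g x = (\<Sum>z\<in>B. harm_measure B x z * g z)"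

lemma harm_avg_start_in:
  assumes "finite B" and "x \<in> B"
  shows "harm_avg B g x = g x"
proof -
  have "harm_avg B g x = (\<Sum>z\<in>B. if x = z then g z else 0)"
    unfolding harm_avg_def by (intro sum.cong refl) (simp add: harm_measure_start_in[OF \<open>x \<in> B\<close>])
  then show ?thesis using assms by simp
qed

lemma Lap_harm_avg: "x \<notin> B \<Longrightarrow> Lap (harm_avg B g) x = 0"
proof -
  assume "x \<notin> B"
  have "harm_avg B g = (\<lambda>y. \<Sum>z\<in>B. g z * harm_measure B y z)"
    by (simp add: fun_eq_iff harm_avg_def mult.commute)
  then show ?thesis
    by (simp add: Lap_lincomb Lap_harm_measure[OF \<open>x \<notin> B\<close>])
qed

lemma Lap_cong_nbrs:
  "f x = g x \<Longrightarrow> (\<And>s. s \<in> steps \<Longrightarrow> f (pt_add x s) = g (pt_add x s)) \<Longrightarrow> Lap f x = Lap g x"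
  by (simp add: Lap_eq_nbr_sum nbr_sum_def)

lemma harm_ext_eqI:
  assumes "finite D" and "\<And>x. x \<notin> D \<Longrightarrow> f x = g x" and "\<And>x. x \<in> D \<Longrightarrow> Lap f x = 0"
  shows "harm_ext D g = f"
  unfolding harm_ext_def
proof (rule the_equality)
  fix f' assume f': "(\<forall>x. x \<notin> D \<longrightarrow> f' x = g x) \<and> (\<forall>x\<in>D. Lap f' x = 0)"
  show "f' = f"
    by (rule Dirichlet_problem_unique[OF \<open>finite D\<close>]) (use f' assms in auto)
qed (use assms in auto)

lemma harm_ext_lat_int:
  assumes "finite D"
  shows "harm_ext (lat_int D) g = (\<lambda>x. if x \<in> D then harm_avg (inner_bd D) g x else g x)"
proof (rule harm_ext_eqI)
  have "finite (inner_bd D)"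
    using assms inner_bd_subset finite_subset by blast
  then show "(if x \<in> D then harm_avg (inner_bd D) g x else g x) = g x" if "x \<notin> lat_int D" for x
    using that by (simp add: lat_int_def harm_avg_start_in)
next
  fix x assume "x \<in> lat_int D"
  then have "x \<in> D" "x \<notin> inner_bd D" by (auto simp: lat_int_def)
  then have "Lap (\<lambda>x. if x \<in> D then harm_avg (inner_bd D) g x else g x) x = Lap (harm_avg (inner_bd D) g) x"
    by (intro Lap_cong_nbrs) (simp_all add: pt_add_mem_if_notin_inner_bd)
  then show "Lap (\<lambda>x. if x \<in> D then harm_avg (inner_bd D) g x else g x) x = 0"
    using Lap_harm_avg[OF \<open>x \<notin> inner_bd D\<close>] by simp
qed (use assms in \<open>simp add: lat_int_def\<close>)

lemma harmonic_eq_harm_avg: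
  assumes "finite D" and "\<And>y. y \<in> lat_int D \<Longrightarrow> Lap F y = 0" and "x \<in> D"
  shows "F x = harm_avg (inner_bd D) F x"
proof -
  have "F = harm_ext (lat_int D) F"
    using assms(1,2) by (intro harm_ext_eqI[symmetric]) (simp_all add: lat_int_def)
  also have "\<dots> = (\<lambda>x. if x \<in> D then harm_avg (inner_bd D) F x else F x)"
    by (rule harm_ext_lat_int[OF \<open>finite D\<close>])
  finally show ?thesis
    using \<open>x \<in> D\<close> by (metis (full_types))
qed

text \<open>\<open>exit_law B F \<mu>\<close> is the paper's \<open>\<mu>\<Pi>\<close>: the law of the walk at its hitting time of \<open>B\<close>
  when started from the weights \<open>\<mu>\<close> on \<open>F\<close>.\<close>
definition exit_law :: "pt set \<Rightarrow> pt set \<Rightarrow> (pt \<Rightarrow> real) \<Rightarrow> pt \<Rightarrow> real" where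
  "exit_law B F \<mu> z = (\<Sum>x\<in>F. \<mu> x * harm_measure B x z)"

lemma exit_law_nonneg: "(\<And>x. x \<in> F \<Longrightarrow> 0 \<le> \<mu> x) \<Longrightarrow> 0 \<le> exit_law B F \<mu> z"
  unfolding exit_law_def by (intro sum_nonneg mult_nonneg_nonneg harm_measure_nonneg) auto

lemma exit_law_notin: "z \<notin> B \<Longrightarrow> exit_law B F \<mu> z = 0"
  by (simp add: exit_law_def harm_measure_notin)

lemma exit_law_divide: "exit_law B F (\<lambda>x. \<mu> x / c) z = exit_law B F \<mu> z / c"
  by (simp add: exit_law_def sum_divide_distrib)

lemma sum_exit_law_superset:
  assumes "finite W" and "B \<subseteq> W"
  shows "(\<Sum>z\<in>W. exit_law B F \<mu> z * g z) = (\<Sum>z\<in>B. exit_law B F \<mu> z * g z)"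
  using assms by (intro sum.mono_neutral_right) (auto simp: exit_law_notin)

lemma sum_harm_ext_eq_exit_law:
  assumes W: "finite W" and "F \<subseteq> D" and "D \<subseteq> W"
  shows "(\<Sum>x\<in>F. \<mu> x * harm_ext (lat_int D) g x) = (\<Sum>z\<in>W. exit_law (inner_bd D) F \<mu> z * g z)"
proof -
  have "finite D" using W \<open>D \<subseteq> W\<close> finite_subset by blast
  have "(\<Sum>x\<in>F. \<mu> x * harm_ext (lat_int D) g x) = (\<Sum>x\<in>F. \<mu> x * harm_avg (inner_bd D) g x)"
    using \<open>F \<subseteq> D\<close> by (intro sum.cong refl) (auto simp: harm_ext_lat_int[OF \<open>finite D\<close>])
  also have "\<dots> = (\<Sum>z\<in>inner_bd D. exit_law (inner_bd D) F \<mu> z * g z)"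
    unfolding harm_avg_def exit_law_def
    by (simp add: sum_distrib_left sum_distrib_right mult.assoc sum.swap[of _ F])
  also have "\<dots> = (\<Sum>z\<in>W. exit_law (inner_bd D) F \<mu> z * g z)"
    using inner_bd_subset \<open>D \<subseteq> W\<close> by (intro sum_exit_law_superset[OF W, symmetric]) blast
  finally show ?thesis .
qed

text \<open>Pushing the escape probabilities of \<open>A\<close> to \<open>\<partial>\<^sup>i\<^sup>n D\<close> does not change their Green potential
  there, because \<open>Green W \<cdot> y\<close> is harmonic inside \<open>D\<close> for \<open>y \<in> \<partial>\<^sup>i\<^sup>n D\<close>.\<close>
lemma sum_exit_law_Green:
  assumes W: "finite W" and "A \<subseteq> D" and "D \<subseteq> W" and "y \<in> inner_bd D"
  shows "(\<Sum>z\<in>W. exit_law (inner_bd D) (inner_bd A) (escape_prob W A) z * Green W z y)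
       = hit_before A (- W) y"
proof -
  have "finite D" using W \<open>D \<subseteq> W\<close> finite_subset by blast
  have harmonic: "Lap (\<lambda>v. Green W v y) v = 0" if "v \<in> lat_int D" for v
    using that \<open>y \<in> inner_bd D\<close> \<open>D \<subseteq> W\<close> by (auto simp: Lap_Green[OF W] lat_int_def)
  have "(\<Sum>z\<in>W. exit_law (inner_bd D) (inner_bd A) (escape_prob W A) z * Green W z y)
      = (\<Sum>x\<in>inner_bd A. escape_prob W A x * harm_avg (inner_bd D) (\<lambda>v. Green W v y) x)"
    unfolding harm_avg_def exit_law_def using inner_bd_subset \<open>D \<subseteq> W\<close>
    by (subst sum_exit_law_superset[OF W, unfolded exit_law_def])
       (auto simp: sum_distrib_left sum_distrib_right mult.assoc sum.swap[of _ "inner_bd A"])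
  also have "\<dots> = (\<Sum>x\<in>inner_bd A. escape_prob W A x * Green W x y)"
  proof (intro sum.cong refl)
    fix x assume "x \<in> inner_bd A"
    then have "x \<in> D" using inner_bd_subset \<open>A \<subseteq> D\<close> by blast
    then show "escape_prob W A x * harm_avg (inner_bd D) (\<lambda>v. Green W v y) x = escape_prob W A x * Green W x y"
      using harmonic_eq_harm_avg[OF \<open>finite D\<close> harmonic] by simp
  qed
  also have "\<dots> = hit_before A (- W) y"
    using \<open>A \<subseteq> D\<close> \<open>D \<subseteq> W\<close>
    by (simp add: hit_before_last_exit[OF W] Green_sym[OF W, of y] mult.commute)
  finally show ?thesis .
qed

section \<open>Variance of averages of the harmonic extension\<close>

lemma Green_form_exit_law:
  fixes \<kappa> :: real
  assumes W: "finite W" and "A \<subseteq> D" and "D \<subseteq> W"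
  defines "c \<equiv> exit_law (inner_bd D) (inner_bd A) (\<lambda>x. escape_prob W A x / \<kappa>)"
  shows "(\<Sum>x\<in>W. \<Sum>y\<in>W. c x * c y * Green W x y) = (\<Sum>y\<in>inner_bd D. c y * hit_before A (- W) y) / \<kappa>"
proof -
  have "(\<Sum>x\<in>W. \<Sum>y\<in>W. c x * c y * Green W x y) = (\<Sum>y\<in>W. c y * (\<Sum>x\<in>W. c x * Green W x y))"
    by (subst sum.swap) (simp add: sum_distrib_left mult_ac)
  also have "\<dots> = (\<Sum>y\<in>inner_bd D. c y * (\<Sum>x\<in>W. c x * Green W x y))"
    unfolding c_def using inner_bd_subset \<open>D \<subseteq> W\<close> by (intro sum_exit_law_superset[OF W]) blast
  also have "\<dots> = (\<Sum>y\<in>inner_bd D. c y * (hit_before A (- W) y / \<kappa>))"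
  proof (intro sum.cong refl)
    fix y assume "y \<in> inner_bd D"
    have "(\<Sum>x\<in>W. c x * Green W x y)
        = (\<Sum>x\<in>W. exit_law (inner_bd D) (inner_bd A) (escape_prob W A) x * Green W x y) / \<kappa>"
      by (simp add: c_def exit_law_divide sum_divide_distrib)
    then show "c y * (\<Sum>x\<in>W. c x * Green W x y) = c y * (hit_before A (- W) y / \<kappa>)"
      using sum_exit_law_Green[OF W \<open>A \<subseteq> D\<close> \<open>D \<subseteq> W\<close> \<open>y \<in> inner_bd D\<close>] by simp
  qed
  finally show ?thesis
    by (simp add: sum_divide_distrib)
qed

lemma variance_centered_gaussian_field_lincomb:
  assumes h: "centered_gaussian_field M W C h" and nonneg: "0 \<le> (\<Sum>x\<in>W. \<Sum>y\<in>W. c x * c y * C x y)"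
  shows "prob_space.variance M (\<lambda>\<omega>. \<Sum>x\<in>W. c x * h x \<omega>) = (\<Sum>x\<in>W. \<Sum>y\<in>W. c x * c y * C x y)"
proof -
  let ?s = "\<Sum>x\<in>W. \<Sum>y\<in>W. c x * c y * C x y" and ?X = "\<lambda>\<omega>. \<Sum>x\<in>W. c x * h x \<omega>"
  interpret prob_space M
    using h by (simp add: centered_gaussian_field_def)
  have law: "(0 < ?s \<longrightarrow> distributed M lborel ?X (normal_density 0 (sqrt ?s))) \<and> (?s \<le> 0 \<longrightarrow> (AE \<omega> in M. ?X \<omega> = 0))"
    using h unfolding centered_gaussian_field_def Let_def by blast
  show ?thesis
  proof (cases "0 < ?s")
    case True
    then have "variance ?X = (sqrt ?s)\<^sup>2"
      using law by (intro normal_distributed_variance) auto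
    then show ?thesis using nonneg by simp
  next
    case False
    then have "AE \<omega> in M. ?X \<omega> = 0" using law by simp
    moreover from this have "expectation ?X = 0" by (rule integral_eq_zero_AE)
    ultimately have "variance ?X = 0" by (auto intro: integral_eq_zero_AE)
    then show ?thesis
      using False nonneg by simp
  qed
qed

lemma variance_harm_ext_escape_average:
  fixes \<kappa> :: real
  assumes W: "finite W" and "A \<subseteq> D" and "D \<subseteq> W" and "0 \<le> \<kappa>"
    and h: "centered_gaussian_field M W (Green W) h"
  defines "\<gamma> \<equiv> \<lambda>x. escape_prob W A x / \<kappa>"
  shows "prob_space.variance M (\<lambda>\<omega>. \<Sum>x\<in>inner_bd A. \<gamma> x * harm_ext (lat_int D) (\<lambda>z. h z \<omega>) x)
       = (\<Sum>y\<in>inner_bd D. exit_law (inner_bd D) (inner_bd A) \<gamma> y * hit_before A (- W) y) / \<kappa>"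
proof -
  define c where "c = exit_law (inner_bd D) (inner_bd A) \<gamma>"
  have comb: "(\<Sum>x\<in>inner_bd A. \<gamma> x * harm_ext (lat_int D) (\<lambda>z. h z \<omega>) x) = (\<Sum>z\<in>W. c z * h z \<omega>)" for \<omega>
    unfolding c_def using inner_bd_subset \<open>A \<subseteq> D\<close> \<open>D \<subseteq> W\<close>
    by (intro sum_harm_ext_eq_exit_law[OF W]) blast+
  have form: "(\<Sum>x\<in>W. \<Sum>y\<in>W. c x * c y * Green W x y) = (\<Sum>y\<in>inner_bd D. c y * hit_before A (- W) y) / \<kappa>"
    unfolding c_def \<gamma>_def by (rule Green_form_exit_law[OF W \<open>A \<subseteq> D\<close> \<open>D \<subseteq> W\<close>])
  have "0 \<le> c y" for y
    unfolding c_def \<gamma>_def using \<open>0 \<le> \<kappa>\<close>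
    by (intro exit_law_nonneg divide_nonneg_nonneg escape_prob_nonneg)
  then have "0 \<le> (\<Sum>x\<in>W. \<Sum>y\<in>W. c x * c y * Green W x y)"
    unfolding form using \<open>0 \<le> \<kappa>\<close>
    by (intro divide_nonneg_nonneg sum_nonneg mult_nonneg_nonneg hit_before_nonneg)
  then have "prob_space.variance M (\<lambda>\<omega>. \<Sum>z\<in>W. c z * h z \<omega>) = (\<Sum>x\<in>W. \<Sum>y\<in>W. c x * c y * Green W x y)"
    by (rule variance_centered_gaussian_field_lincomb[OF h])
  also note form
  finally show ?thesis
    unfolding comb c_def .
qed

lemma lat_mono: "S \<subseteq> T \<Longrightarrow> lat N S \<subseteq> lat N T"
  by (auto simp: lat_def)

lemma inner_part_subset: "inner_part V s \<subseteq> V"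
  by (auto simp: inner_part_def)

lemma finite_lat:
  assumes "bounded S"
  shows "finite (lat N S)"
proof -
  obtain R where R: "\<forall>x\<in>S. norm x \<le> R" using assms by (auto simp: bounded_iff)
  define K where "K = \<lceil>real N * R\<rceil>"
  have "lat N S \<subseteq> {-K..K} \<times> {-K..K}"
  proof
    fix z assume "z \<in> lat N S"
    then obtain x where "x \<in> S" and z: "emb z = real N *\<^sub>R x" by (auto simp: lat_def)
    then have "norm (emb z) \<le> real N * R"
      using R by (simp add: mult_left_mono)
    moreover have "\<bar>real_of_int (fst z)\<bar> \<le> norm (emb z)" "\<bar>real_of_int (snd z)\<bar> \<le> norm (emb z)"
      using norm_fst_le[of "real_of_int (fst z)" "real_of_int (snd z)"]
        norm_snd_le[of "real_of_int (snd z)" "real_of_int (fst z)"]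
      by (simp_all add: emb_def)
    ultimately have "\<bar>fst z\<bar> \<le> K" "\<bar>snd z\<bar> \<le> K"
      unfolding K_def by linarith+
    then show "z \<in> {-K..K} \<times> {-K..K}" by (cases z) auto
  qed
  then show ?thesis by (rule finite_subset) simp
qed

theorem lemma3p7:
  fixes V W :: "(real \<times> real) set" and N :: nat and r :: real
    and M :: "'a measure" and h :: "pt \<Rightarrow> 'a \<Rightarrow> real"
  assumes "V \<noteq> {}" "open V" "bounded V" "simply_connected V"
    and "W \<noteq> {}" "open W" "bounded W" "simply_connected W"
    and "V \<subseteq> W" "compact (closure V)" "closure V \<subseteq> W"
    and "N > 0" "r > 0"
    and "DGFF M (lat N W) h"
  defines "WN \<equiv> lat N W" and "VN \<equiv> lat N V"
    and "VNr \<equiv> lat N (inner_part V (r / real N))"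
  defines "phi \<equiv> (\<lambda>\<omega>. harm_ext (lat_int VN) (\<lambda>x. h x \<omega>))"
    and "\<gamma> \<equiv> (\<lambda>x. Pr x (\<lambda>p. hit (- WN) p < hitp VNr p) / (2 * Cap WN VNr))"
  defines "phibar \<equiv> (\<lambda>\<omega>. \<Sum>x\<in>inner_bd VNr. \<gamma> x * phi \<omega> x)"
    and "\<gamma>\<Pi> \<equiv> (\<lambda>y. Pr_init (inner_bd VNr) \<gamma>
                 (\<lambda>p. hit (inner_bd VN) p \<noteq> \<infinity> \<and> p (the_enat (hit (inner_bd VN) p)) = y))"
  shows "prob_space.variance M phibar =
           Pr_init (inner_bd VN) \<gamma>\<Pi> (\<lambda>p. hit VNr p < hit (- WN) p) / (2 * Cap WN VNr)"
proof -
  have fin: "finite WN"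
    unfolding WN_def using \<open>bounded W\<close> by (rule finite_lat)
  have subsets: "VNr \<subseteq> VN" "VN \<subseteq> WN"
    unfolding VNr_def VN_def WN_def using \<open>V \<subseteq> W\<close> by (simp_all add: lat_mono inner_part_subset)
  have "0 \<le> 2 * Cap WN VNr"
    using Cap_nonneg[OF fin] subsets by simp
  moreover have "centered_gaussian_field M WN (Green WN) h"
    using \<open>DGFF M (lat N W) h\<close> by (simp add: DGFF_def WN_def)
  moreover have "\<gamma> = (\<lambda>x. escape_prob WN VNr x / (2 * Cap WN VNr))"
    by (simp add: fun_eq_iff \<gamma>_def escape_prob_def)
  moreover have "\<gamma>\<Pi> = exit_law (inner_bd VN) (inner_bd VNr) \<gamma>"
    by (simp add: fun_eq_iff \<gamma>\<Pi>_def Pr_init_def exit_law_def harm_measure_def)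
  ultimately have "prob_space.variance M phibar
      = (\<Sum>y\<in>inner_bd VN. \<gamma>\<Pi> y * hit_before VNr (- WN) y) / (2 * Cap WN VNr)"
    unfolding phibar_def phi_def by (simp only: variance_harm_ext_escape_average[OF fin subsets])
  also have "(\<Sum>y\<in>inner_bd VN. \<gamma>\<Pi> y * hit_before VNr (- WN) y)
      = Pr_init (inner_bd VN) \<gamma>\<Pi> (\<lambda>p. hit VNr p < hit (- WN) p)"
    by (simp add: Pr_init_def hit_before_def)
  finally show ?thesis .
qed

end
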